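(* Let $G$ be a connected, simply connected nilpotent Lie group with Lie algebra $\mathfrak g$, and let $\varphi$ be a Lie group endomorphism of $G$ whose differential $\varphi_*:\mathfrak g\to\mathfrak g$ has eigenvalue $1$. Let $N$ be a uniform lattice of $G$ and let $g_1,\dots,g_n\in G$. Then there exists $\alpha\in G$ such that $g_k\varphi(x)\alpha\neq\gamma x$ for all $x\in G$, all $\gamma\in N$ and all $k\in\{1,\dots,n\}$.
   Context: A uniform lattice is a discrete cocompact subgroup. *)

theory Defs
  imports "HOL-Analysis.Analysis" "HOL-Algebra.Algebra"
begin

text \<open>Infinitely (Frechet) differentiable maps between finite-dimensional real spaces:
  D vs x is the iterated derivative of f at x applied to the directions in vs.\<close>
definition smooth_map :: "('a::euclidean_space \<Rightarrow> 'b::euclidean_space) \<Rightarrow> bool" where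
  "smooth_map f \<longleftrightarrow>
     (\<exists>D :: 'a list \<Rightarrow> 'a \<Rightarrow> 'b. D [] = f \<and>
        (\<forall>vs x. (D vs has_derivative (\<lambda>v. D (v # vs) x)) (at x)))"

fun lower_central :: "('a, 'b) monoid_scheme \<Rightarrow> nat \<Rightarrow> 'a set" where
  "lower_central G 0 = carrier G"
| "lower_central G (Suc k) =
     generate G {a \<otimes>\<^bsub>G\<^esub> b \<otimes>\<^bsub>G\<^esub> inv\<^bsub>G\<^esub> a \<otimes>\<^bsub>G\<^esub> inv\<^bsub>G\<^esub> b
                 | a b. a \<in> lower_central G k \<and> b \<in> carrier G}"

definition nilpotent_group :: "('a, 'b) monoid_scheme \<Rightarrow> bool" where
  "nilpotent_group G \<longleftrightarrow> group G \<and> (\<exists>k. lower_central G k = {\<one>\<^bsub>G\<^esub>})"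

text \<open>A connected, simply connected nilpotent Lie group, realised (via the exponential
  diffeomorphism) on a finite-dimensional real vector space 'a with its standard smooth
  structure: the group law and inversion are smooth and the group is nilpotent.\<close>
definition sc_nilpotent_Lie_group :: "('a::euclidean_space) monoid \<Rightarrow> bool" where
  "sc_nilpotent_Lie_group G \<longleftrightarrow>
     nilpotent_group G \<and> carrier G = UNIV \<and>
     smooth_map (\<lambda>p::'a \<times> 'a. fst p \<otimes>\<^bsub>G\<^esub> snd p) \<and> smooth_map (\<lambda>x. inv\<^bsub>G\<^esub> x)"

definition Lie_endomorphism :: "('a::euclidean_space) monoid \<Rightarrow> ('a \<Rightarrow> 'a) \<Rightarrow> bool" where
  "Lie_endomorphism G \<phi> \<longleftrightarrow> \<phi> \<in> hom G G \<and> smooth_map \<phi>"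

text \<open>The differential at the identity (the induced map on the Lie algebra = tangent
  space at the identity) has eigenvalue 1.\<close>
definition differential_has_eigenvalue_one :: "('a::euclidean_space) monoid \<Rightarrow> ('a \<Rightarrow> 'a) \<Rightarrow> bool" where
  "differential_has_eigenvalue_one G \<phi> \<longleftrightarrow>
     (\<exists>\<phi>'. (\<phi> has_derivative \<phi>') (at \<one>\<^bsub>G\<^esub>) \<and> (\<exists>v. v \<noteq> 0 \<and> \<phi>' v = v))"

text \<open>Uniform lattice: a discrete subgroup N with compact quotient N\G, i.e. some compact
  K with G = N K.\<close>
definition uniform_lattice :: "('a::euclidean_space) monoid \<Rightarrow> 'a set \<Rightarrow> bool" where
  "uniform_lattice G N \<longleftrightarrow>
     subgroup N G \<and>
     (\<forall>\<gamma>\<in>N. \<exists>e>0. \<forall>\<delta>\<in>N. dist \<delta> \<gamma> < e \<longrightarrow> \<delta> = \<gamma>) \<and>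
     (\<exists>K. compact K \<and> (\<forall>g\<in>carrier G. \<exists>\<gamma>\<in>N. \<exists>k\<in>K. g = \<gamma> \<otimes>\<^bsub>G\<^esub> k))"

end

theory Submission
  imports Defs
begin

(* The bad alpha form the union, over k and gamma in N, of the twisted orbits
   {phi(x)^-1 c x | x in G} with c = g_k^-1 gamma.  N is discrete, hence countable, so it suffices
   that every twisted orbit is Lebesgue-null, and by Sard's theorem that x |-> phi(x)^-1 c x has a
   singular derivative everywhere.  Translating x and its image y back to the identity turns that
   derivative into I - Ad(y^-1) o phi_*, so it suffices that Ad(a) o phi_* has eigenvalue 1 for
   every a.  This is where nilpotency enters: the derivatives at 1 of the j-fold iterated
   commutator maps span subspaces W_j of the Lie algebra, with W_0 everything and W_r = 0, which
   are invariant under Ad and phi_* and satisfy (I - Ad a) W_j <= W_(j+1).  For a fixed vector v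
   of phi_* lying in W_i but not in W_(i+1), the map I - Ad(a) o phi_* sends W_(i+1) into itself
   and v into W_(i+1), so it cannot be injective. *)

(* The type of basis vectors of 'a indexes coordinates, so that results stated for
   real ^ 'n, such as baby_Sard, transfer to an arbitrary Euclidean space. *)
typedef (overloaded) ('a::euclidean_space) basis_index = "Basis :: 'a set"
  using nonempty_Basis by blast

lemma bij_betw_Rep_basis_index: "bij_betw Rep_basis_index UNIV Basis"
  unfolding bij_betw_def inj_def
  using Rep_basis_index_inject type_definition.Rep_range[OF type_definition_basis_index] by blast

instance basis_index :: (euclidean_space) finite
  by standard (simp add: bij_betw_finite[OF bij_betw_Rep_basis_index])

instantiation basis_index :: (euclidean_space) linorder
begin
definition less_eq_basis_index :: "'a basis_index \<Rightarrow> 'a basis_index \<Rightarrow> bool"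
  where "less_eq_basis_index i j \<longleftrightarrow> to_nat i \<le> to_nat j"
definition less_basis_index :: "'a basis_index \<Rightarrow> 'a basis_index \<Rightarrow> bool"
  where "less_basis_index i j \<longleftrightarrow> to_nat i < to_nat j"
instance
  by standard (auto simp: less_eq_basis_index_def less_basis_index_def)
end

instance basis_index :: (euclidean_space) wellorder
proof -
  have "{(i::'a basis_index, j). i < j} = inv_image less_than to_nat"
    by (auto simp: less_basis_index_def)
  then have "wf {(i::'a basis_index, j). i < j}"
    by simp
  then show "OFCLASS('a basis_index, wellorder_class)"
    by (rule wf_wellorderI) intro_classes
qed

lemma card_basis_index: "CARD('a::euclidean_space basis_index) = DIM('a)"
  using bij_betw_same_card[OF bij_betw_Rep_basis_index] by simp

definition coords :: "'a::euclidean_space \<Rightarrow> real ^ 'a basis_index"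
  where "coords x = (\<chi> i. x \<bullet> Rep_basis_index i)"

definition of_coords :: "real ^ 'a basis_index \<Rightarrow> 'a::euclidean_space"
  where "of_coords v = (\<Sum>i\<in>UNIV. (v $ i) *\<^sub>R Rep_basis_index i)"

lemma linear_coords: "linear coords"
  by (auto simp: linear_iff coords_def vec_eq_iff inner_add_left)

lemma linear_of_coords: "linear of_coords"
  by (auto simp: linear_iff of_coords_def scaleR_add_left sum.distrib scaleR_sum_right)

lemma of_coords_coords [simp]: "of_coords (coords x) = x"
proof -
  have "(\<Sum>i\<in>UNIV. (x \<bullet> Rep_basis_index i) *\<^sub>R Rep_basis_index i) = (\<Sum>b\<in>Basis. (x \<bullet> b) *\<^sub>R b)"
    by (rule sum.reindex_bij_betw[OF bij_betw_Rep_basis_index])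
  then show ?thesis
    by (simp add: of_coords_def coords_def euclidean_representation)
qed

lemma coords_of_coords [simp]: "coords (of_coords v) = v"
proof -
  have "of_coords v \<bullet> Rep_basis_index j = v $ j" for j
  proof -
    have "of_coords v \<bullet> Rep_basis_index j = (\<Sum>i\<in>UNIV. (v $ i) * (Rep_basis_index i \<bullet> Rep_basis_index j))"
      by (simp add: of_coords_def inner_sum_left)
    also have "\<dots> = (\<Sum>i\<in>UNIV. if i = j then v $ i else 0)"
      by (rule sum.cong) (auto simp: inner_not_same_Basis Rep_basis_index Rep_basis_index_inject)
    finally show ?thesis
      by simp
  qed
  then show ?thesis
    by (simp add: coords_def vec_eq_iff)
qed

theorem negligible_range_noninjective_derivative:
  fixes f :: "'a::euclidean_space \<Rightarrow> 'a"
  assumes der: "\<And>x. (f has_derivative f' x) (at x)"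
    and not_inj: "\<And>x. \<not> inj (f' x)"
  shows "negligible (range f)"
proof -
  define g where "g = coords \<circ> f \<circ> of_coords"
  define g' where "g' = (\<lambda>v. coords \<circ> f' (of_coords v) \<circ> of_coords)"
  have g_der: "(g has_derivative g' v) (at v within UNIV)" for v
    unfolding g_def g'_def
    by (intro diff_chain_at linear_imp_has_derivative linear_coords linear_of_coords der)
  have "\<not> inj (g' v)" for v
  proof
    assume "inj (g' v)"
    then have "inj (of_coords \<circ> g' v \<circ> coords)"
      by (intro inj_compose) (auto intro: inj_on_inverseI[where g = coords] inj_on_inverseI[where g = of_coords])
    moreover have "of_coords \<circ> g' v \<circ> coords = f' (of_coords v)"
      by (simp add: g'_def o_def)
    ultimately show False
      using not_inj by simp
  qed
  moreover have "linear (g' v)" for v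
    using g_der has_derivative_linear by blast
  ultimately have "rank (matrix (g' v)) < CARD('a basis_index)" for v
    by (simp add: less_rank_noninjective)
  then have "negligible (range g)"
    by (intro baby_Sard[OF order_refl g_der])
  moreover have "DIM(real ^ 'a basis_index) \<le> DIM('a)"
    by (simp add: card_basis_index)
  ultimately have "negligible (of_coords ` range g)"
    using negligible_differentiable_image_negligible[of "range g" of_coords]
      linear_imp_differentiable_on[OF linear_of_coords] by blast
  moreover have "of_coords ` range g = range f"
  proof -
    have "of_coords ` range g = f ` range of_coords"
      by (simp add: g_def image_comp o_def)
    also have "range of_coords = UNIV"
      using surjI[of of_coords coords] by simp
    finally show ?thesis .
  qed
  ultimately show ?thesis
    by simp
qed

lemma discrete_imp_countable:
  fixes S :: "'a::second_countable_topology set"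
  assumes "discrete S"
  shows "countable S"
proof -
  have "openin (top_of_set S) U" if "U \<in> (\<lambda>x. {x}) ` S" for U
  proof -
    from that obtain x where x: "x \<in> S" and U: "U = {x}"
      by blast
    obtain T where "open T" "T \<inter> S = {x}"
      using isolated_inE[OF discreteD[OF assms x]] by metis
    then show ?thesis
      using openin_open_Int[of T S] by (simp add: U Int_commute)
  qed
  then obtain \<F> where \<F>: "\<F> \<subseteq> (\<lambda>x. {x}) ` S" "countable \<F>" "\<Union>\<F> = \<Union>((\<lambda>x. {x}) ` S)"
    using Lindelof_openin by metis
  have "countable (\<Union>U\<in>\<F>. U)"
    using \<F>(1,2) by (intro countable_UN) auto
  then show ?thesis
    using \<F>(3) by simp
qed

lemma linear_inj_image_subspace_eq:
  fixes f :: "'a::euclidean_space \<Rightarrow> 'a"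
  assumes "linear f" "inj f" "subspace V" "f ` V \<subseteq> V"
  shows "f ` V = V"
proof (rule subspace_dim_equal)
  have "dim (f ` V) = dim V"
    by (rule dim_image_eq[OF assms(1)]) (use assms(2) in \<open>auto intro: inj_on_subset\<close>)
  then show "dim V \<le> dim (f ` V)"
    by simp
qed (use assms in \<open>auto intro: linear_subspace_image\<close>)

lemma left_inverse_imp_inj_derivative:
  assumes "(f has_derivative f') (at a)" "(g has_derivative g') (at (f a))" "\<And>x. g (f x) = x"
  shows "inj f'"
proof -
  have "g \<circ> f = id"
    using assms(3) by auto
  then have "(id has_derivative g' \<circ> f') (at a)"
    using diff_chain_at[OF assms(1,2)] by simp
  then have "g' \<circ> f' = id"
    by (rule has_derivative_unique[OF _ has_derivative_id])
  then show ?thesis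
    using inj_on_imageI2[of g' f' UNIV] by simp
qed

lemma span_image_subset_span:
  assumes "linear f" "f ` S \<subseteq> span T"
  shows "f ` span S \<subseteq> span T"
proof -
  have "f ` span S = span (f ` S)"
    by (simp add: linear_span_image[OF assms(1)])
  also have "\<dots> \<subseteq> span T"
    using span_mono[OF assms(2)] by (simp add: span_span)
  finally show ?thesis .
qed

locale differentiable_group = group G for G :: "'a::euclidean_space monoid" (structure) +
  assumes carrier_eq_UNIV: "carrier G = UNIV"
    and differentiable_mult: "\<And>p. (\<lambda>p. fst p \<otimes> snd p) differentiable (at p)"
    and differentiable_inv: "\<And>x. (\<lambda>x. inv x) differentiable (at x)"
begin

declare carrier_eq_UNIV [simp]

definition mult_deriv :: "'a \<times> 'a \<Rightarrow> 'a \<times> 'a \<Rightarrow> 'a"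
  where "mult_deriv p = frechet_derivative (\<lambda>p. fst p \<otimes> snd p) (at p)"

lemma has_derivative_mult_deriv: "((\<lambda>p. fst p \<otimes> snd p) has_derivative mult_deriv p) (at p)"
  unfolding mult_deriv_def using differentiable_mult frechet_derivative_works by blast

lemma has_derivative_group_mult:
  assumes "(a has_derivative A) (at x)" "(b has_derivative B) (at x)"
  shows "((\<lambda>h. a h \<otimes> b h) has_derivative (\<lambda>w. mult_deriv (a x, b x) (A w, B w))) (at x)"
  using diff_chain_at[OF has_derivative_Pair[OF assms] has_derivative_mult_deriv]
  by (simp add: o_def)

lemma mult_deriv_one: "mult_deriv (\<one>, \<one>) (u, w) = u + w"
proof -
  have "((\<lambda>h. h) has_derivative (\<lambda>w. mult_deriv (\<one>, \<one>) (w, 0))) (at \<one>)"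
    using has_derivative_group_mult[OF has_derivative_ident has_derivative_const, of \<one> \<one>] by simp
  then have right: "(\<lambda>w. mult_deriv (\<one>, \<one>) (w, 0)) = (\<lambda>w. w)"
    by (rule has_derivative_unique[OF _ has_derivative_ident])
  have "((\<lambda>h. h) has_derivative (\<lambda>w. mult_deriv (\<one>, \<one>) (0, w))) (at \<one>)"
    using has_derivative_group_mult[OF has_derivative_const has_derivative_ident, of \<one> \<one>] by simp
  then have left: "(\<lambda>w. mult_deriv (\<one>, \<one>) (0, w)) = (\<lambda>w. w)"
    by (rule has_derivative_unique[OF _ has_derivative_ident])
  have "linear (mult_deriv (\<one>, \<one>))"
    using has_derivative_mult_deriv by (rule has_derivative_linear)
  then have "mult_deriv (\<one>, \<one>) ((u, 0) + (0, w)) = mult_deriv (\<one>, \<one>) (u, 0) + mult_deriv (\<one>, \<one>) (0, w)"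
    by (rule linear_add)
  also have "\<dots> = u + w"
    using fun_cong[OF right, of u] fun_cong[OF left, of w] by simp
  finally show ?thesis
    by simp
qed

lemma has_derivative_group_inv_one: "((\<lambda>x. inv x) has_derivative uminus) (at \<one>)"
proof -
  obtain I where I: "((\<lambda>x. inv x) has_derivative I) (at \<one>)"
    using differentiable_inv unfolding differentiable_def by blast
  have "((\<lambda>h. h \<otimes> inv h) has_derivative (\<lambda>w. w + I w)) (at \<one>)"
    using has_derivative_group_mult[OF has_derivative_ident I] by (simp add: mult_deriv_one)
  then have "((\<lambda>h. \<one>) has_derivative (\<lambda>w. w + I w)) (at \<one>)"
    by simp
  moreover have "((\<lambda>h. \<one>) has_derivative (\<lambda>w. 0)) (at \<one>)"
    by (rule has_derivative_const)
  ultimately have "(\<lambda>w. w + I w) = (\<lambda>w. 0)"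
    by (rule has_derivative_unique)
  then have "I = uminus"
    by (simp add: fun_eq_iff add_eq_0_iff)
  with I show ?thesis
    by simp
qed

lemma has_derivative_group_mult_one:
  assumes "(a has_derivative A) (at \<one>)" "(b has_derivative B) (at \<one>)" "a \<one> = \<one>" "b \<one> = \<one>"
  shows "((\<lambda>h. a h \<otimes> b h) has_derivative (\<lambda>w. A w + B w)) (at \<one>)"
  using has_derivative_group_mult[OF assms(1,2)] by (simp add: assms(3,4) mult_deriv_one)

lemma has_derivative_group_inv_comp_one:
  assumes "(a has_derivative A) (at \<one>)" "a \<one> = \<one>"
  shows "((\<lambda>h. inv (a h)) has_derivative (\<lambda>w. - A w)) (at \<one>)"
  using diff_chain_at[OF assms(1), of "\<lambda>x. inv x" uminus] has_derivative_group_inv_one assms(2)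
  by (simp add: o_def)

lemma differentiable_group_mult:
  assumes "a differentiable (at x)" "b differentiable (at x)"
  shows "(\<lambda>h. a h \<otimes> b h) differentiable (at x)"
  using assms has_derivative_group_mult unfolding differentiable_def by blast

lemma differentiable_group_inv:
  assumes "a differentiable (at x)"
  shows "(\<lambda>h. inv (a h)) differentiable (at x)"
  using differentiable_chain_at[OF assms differentiable_inv] by (simp add: o_def)

lemma left_translation_deriv:
  obtains L where "((\<lambda>h. x \<otimes> h) has_derivative L) (at \<one>)" "inj L"
proof -
  obtain L where L: "((\<lambda>h. x \<otimes> h) has_derivative L) (at \<one>)"
    using differentiable_group_mult[OF differentiable_const differentiable_ident]
    unfolding differentiable_def by blast
  obtain K where "((\<lambda>h. inv x \<otimes> h) has_derivative K) (at (x \<otimes> \<one>))"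
    using differentiable_group_mult[OF differentiable_const differentiable_ident]
    unfolding differentiable_def by blast
  then have "inj L"
    by (rule left_inverse_imp_inj_derivative[OF L]) (simp add: m_assoc [symmetric])
  with L show thesis
    by (rule that)
qed

definition conjugation :: "'a \<Rightarrow> 'a \<Rightarrow> 'a"
  where "conjugation y = (\<lambda>h. y \<otimes> h \<otimes> inv y)"

definition Ad :: "'a \<Rightarrow> 'a \<Rightarrow> 'a"
  where "Ad y = frechet_derivative (conjugation y) (at \<one>)"

lemma conjugation_one [simp]: "conjugation y \<one> = \<one>"
  by (simp add: conjugation_def)

lemma has_derivative_conjugation: "(conjugation y has_derivative Ad y) (at \<one>)"
proof -
  have "conjugation y differentiable (at \<one>)"
    unfolding conjugation_def
    by (intro differentiable_group_mult differentiable_const differentiable_ident)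
  then show ?thesis
    unfolding Ad_def using frechet_derivative_works by blast
qed

lemma linear_Ad: "linear (Ad y)"
  using has_derivative_conjugation by (rule has_derivative_linear)

lemma Ad_mult: "Ad (x \<otimes> z) = Ad x \<circ> Ad z"
proof -
  have "conjugation (x \<otimes> z) = conjugation x \<circ> conjugation z"
    by (auto simp: conjugation_def m_assoc inv_mult_group)
  moreover have "(conjugation x \<circ> conjugation z has_derivative Ad x \<circ> Ad z) (at \<one>)"
    using diff_chain_at[OF has_derivative_conjugation, of "conjugation x" "Ad x"]
      has_derivative_conjugation by simp
  ultimately have "(conjugation (x \<otimes> z) has_derivative Ad x \<circ> Ad z) (at \<one>)"
    by simp
  then show ?thesis
    by (rule has_derivative_unique[OF has_derivative_conjugation])
qed

lemma Ad_Ad_conjugation: "Ad x (Ad z w) = Ad (conjugation x z) (Ad x w)"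
proof -
  have "conjugation x z \<otimes> x = x \<otimes> z"
    by (simp add: conjugation_def m_assoc)
  then show ?thesis
    using Ad_mult[of x z] Ad_mult[of "conjugation x z" x] by (metis comp_apply)
qed

lemma has_derivative_conjugation_inv_comp_one:
  assumes "(a has_derivative A) (at \<one>)" "a \<one> = \<one>"
  shows "((\<lambda>h. conjugation y (inv (a h))) has_derivative (\<lambda>w. - Ad y (A w))) (at \<one>)"
  using diff_chain_at[OF has_derivative_group_inv_comp_one[OF assms], of "conjugation y" "Ad y"]
    has_derivative_conjugation assms(2)
  by (simp add: o_def linear_neg[OF linear_Ad])

definition commutator :: "'a \<Rightarrow> 'a \<Rightarrow> 'a"
  where "commutator y = (\<lambda>h. h \<otimes> y \<otimes> inv h \<otimes> inv y)"

lemma commutator_one [simp]: "commutator y \<one> = \<one>"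
  by (simp add: commutator_def)

lemma has_derivative_commutator: "(commutator y has_derivative (\<lambda>w. w - Ad y w)) (at \<one>)"
proof -
  have "((\<lambda>h. conjugation y (inv h)) has_derivative (\<lambda>w. - Ad y w)) (at \<one>)"
    using has_derivative_conjugation_inv_comp_one[OF has_derivative_ident] by simp
  from has_derivative_group_mult_one[OF has_derivative_ident this]
  have "((\<lambda>h. h \<otimes> conjugation y (inv h)) has_derivative (\<lambda>w. w - Ad y w)) (at \<one>)"
    by simp
  moreover have "(\<lambda>h. h \<otimes> conjugation y (inv h)) = commutator y"
    by (auto simp: commutator_def conjugation_def m_assoc)
  ultimately show ?thesis
    by simp
qed

primrec iter_comm :: "'a list \<Rightarrow> 'a \<Rightarrow> 'a" where
  "iter_comm [] h = h"
| "iter_comm (y # ys) h = commutator y (iter_comm ys h)"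

primrec iter_comm_deriv :: "'a list \<Rightarrow> 'a \<Rightarrow> 'a" where
  "iter_comm_deriv [] w = w"
| "iter_comm_deriv (y # ys) w = iter_comm_deriv ys w - Ad y (iter_comm_deriv ys w)"

lemma iter_comm_one [simp]: "iter_comm ys \<one> = \<one>"
  by (induction ys) simp_all

lemma has_derivative_iter_comm: "(iter_comm ys has_derivative iter_comm_deriv ys) (at \<one>)"
proof (induction ys)
  case Nil
  then show ?case
    by (simp add: has_derivative_ident[unfolded id_def])
next
  case (Cons y ys)
  from diff_chain_at[OF Cons, of "commutator y" "\<lambda>w. w - Ad y w"] has_derivative_commutator[of y]
  show ?case
    by (simp add: o_def)
qed

lemma iter_comm_in_lower_central: "iter_comm ys h \<in> lower_central G (length ys)"
  by (induction ys) (auto simp: commutator_def intro!: generate.incl)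

lemma Ad_iter_comm_deriv:
  "Ad x (iter_comm_deriv zs u) = iter_comm_deriv (map (conjugation x) zs) (Ad x u)"
  by (induction zs) (simp_all add: linear_diff[OF linear_Ad] Ad_Ad_conjugation)

definition comm_filtration :: "nat \<Rightarrow> 'a set"
  where "comm_filtration j = span {iter_comm_deriv ys u | ys u. length ys = j}"

lemma subspace_comm_filtration: "subspace (comm_filtration j)"
  by (simp add: comm_filtration_def subspace_span)

lemma comm_filtration_0: "comm_filtration 0 = UNIV"
proof -
  have "u \<in> {iter_comm_deriv ys u | ys u. length ys = 0}" for u
    by (rule CollectI, rule exI[of _ "[]"]) simp
  then show ?thesis
    unfolding comm_filtration_def by (auto intro: span_base)
qed

lemma Ad_comm_filtration:
  assumes "w \<in> comm_filtration j"
  shows "Ad x w \<in> comm_filtration j"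
proof -
  have "Ad x ` comm_filtration j \<subseteq> comm_filtration j"
    unfolding comm_filtration_def
    by (rule span_image_subset_span[OF linear_Ad]) (force simp: Ad_iter_comm_deriv intro: span_base)
  with assms show ?thesis
    by blast
qed

lemma diff_Ad_comm_filtration:
  assumes "w \<in> comm_filtration j"
  shows "w - Ad y w \<in> comm_filtration (Suc j)"
proof -
  have "linear (\<lambda>w. w - Ad y w)"
    using linear_Ad[of y] by (simp add: linear_compose_sub linear_ident)
  moreover have "(\<lambda>w. w - Ad y w) ` {iter_comm_deriv ys u | ys u. length ys = j}
      \<subseteq> span {iter_comm_deriv ys u | ys u. length ys = Suc j}"
  proof
    fix w
    assume "w \<in> (\<lambda>w. w - Ad y w) ` {iter_comm_deriv ys u | ys u. length ys = j}"
    then obtain ys u where "w = iter_comm_deriv (y # ys) u" "length (y # ys) = Suc j"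
      by auto
    then show "w \<in> span {iter_comm_deriv ys u | ys u. length ys = Suc j}"
      by (intro span_base) blast
  qed
  ultimately have "(\<lambda>w. w - Ad y w) ` comm_filtration j \<subseteq> comm_filtration (Suc j)"
    unfolding comm_filtration_def by (rule span_image_subset_span)
  with assms show ?thesis
    by blast
qed

end

locale nilpotent_differentiable_group = differentiable_group +
  fixes r :: nat
  assumes lower_central_trivial: "lower_central G r = {\<one>}"
begin

lemma iter_comm_deriv_eq_0:
  assumes "length ys = r"
  shows "iter_comm_deriv ys = (\<lambda>w. 0)"
proof -
  have "iter_comm ys = (\<lambda>h. \<one>)"
    using iter_comm_in_lower_central[of ys] assms lower_central_trivial by (simp add: fun_eq_iff)
  then have "((\<lambda>h. \<one>) has_derivative iter_comm_deriv ys) (at \<one>)"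
    using has_derivative_iter_comm[of ys] by simp
  moreover have "((\<lambda>h. \<one>) has_derivative (\<lambda>w. 0)) (at \<one>)"
    by (rule has_derivative_const)
  ultimately show ?thesis
    by (rule has_derivative_unique)
qed

lemma comm_filtration_trivial: "comm_filtration r = {0}"
proof -
  have "{iter_comm_deriv ys u | ys u. length ys = r} \<subseteq> {0}"
    by (auto simp: iter_comm_deriv_eq_0)
  then have "comm_filtration r \<subseteq> span {0}"
    unfolding comm_filtration_def by (rule span_mono)
  then have "comm_filtration r \<subseteq> {0}"
    by (simp add: span_insert_0)
  then show ?thesis
    using subspace_0[OF subspace_comm_filtration, of r] by blast
qed

lemma comm_filtration_depth:
  assumes "v \<noteq> 0"
  obtains i where "v \<in> comm_filtration i" "v \<notin> comm_filtration (Suc i)"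
proof -
  have "\<exists>i. v \<in> comm_filtration i \<and> v \<notin> comm_filtration (Suc i)"
  proof (rule ccontr)
    assume "\<not> ?thesis"
    then have "v \<in> comm_filtration i" for i
      by (induction i) (auto simp: comm_filtration_0)
    then show False
      using comm_filtration_trivial assms by blast
  qed
  then show thesis
    using that by blast
qed

end

locale differentiable_endomorphism = nilpotent_differentiable_group +
  fixes \<phi> \<phi>' :: "'a \<Rightarrow> 'a"
  assumes hom_\<phi>: "\<phi> \<in> hom G G"
    and differentiable_\<phi>: "\<And>x. \<phi> differentiable (at x)"
    and has_derivative_\<phi>: "(\<phi> has_derivative \<phi>') (at \<one>)"
begin

lemma \<phi>_mult [simp]: "\<phi> (x \<otimes> y) = \<phi> x \<otimes> \<phi> y"
  using hom_\<phi> by (simp add: hom_mult)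

lemma \<phi>_one [simp]: "\<phi> \<one> = \<one>"
  using hom_one[OF hom_\<phi> is_group is_group] .

lemma \<phi>_inv [simp]: "\<phi> (inv x) = inv (\<phi> x)"
  using group_hom.hom_inv[of G G \<phi> x] hom_\<phi> by (simp add: group_hom_def group_hom_axioms_def is_group)

lemma linear_\<phi>': "linear \<phi>'"
  using has_derivative_\<phi> by (rule has_derivative_linear)

lemma \<phi>'_Ad: "\<phi>' (Ad z w) = Ad (\<phi> z) (\<phi>' w)"
proof -
  have "\<phi> \<circ> conjugation z = conjugation (\<phi> z) \<circ> \<phi>"
    by (auto simp: conjugation_def)
  moreover have "(conjugation (\<phi> z) \<circ> \<phi> has_derivative Ad (\<phi> z) \<circ> \<phi>') (at \<one>)"
    using diff_chain_at[OF has_derivative_\<phi>, of "conjugation (\<phi> z)"] has_derivative_conjugation by simp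
  ultimately have "(\<phi> \<circ> conjugation z has_derivative Ad (\<phi> z) \<circ> \<phi>') (at \<one>)"
    by simp
  moreover have "(\<phi> \<circ> conjugation z has_derivative \<phi>' \<circ> Ad z) (at \<one>)"
    using diff_chain_at[OF has_derivative_conjugation, of \<phi> \<phi>'] has_derivative_\<phi> by simp
  ultimately have "\<phi>' \<circ> Ad z = Ad (\<phi> z) \<circ> \<phi>'"
    by (rule has_derivative_unique[rotated])
  then show ?thesis
    by (metis comp_apply)
qed

lemma \<phi>'_iter_comm_deriv: "\<phi>' (iter_comm_deriv zs u) = iter_comm_deriv (map \<phi> zs) (\<phi>' u)"
  by (induction zs) (simp_all add: linear_diff[OF linear_\<phi>'] \<phi>'_Ad)

lemma \<phi>'_comm_filtration:
  assumes "w \<in> comm_filtration j"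
  shows "\<phi>' w \<in> comm_filtration j"
proof -
  have "\<phi>' ` comm_filtration j \<subseteq> comm_filtration j"
    unfolding comm_filtration_def
    by (rule span_image_subset_span[OF linear_\<phi>']) (force simp: \<phi>'_iter_comm_deriv intro: span_base)
  with assms show ?thesis
    by blast
qed

lemma Ad_comp_has_eigenvalue_one:
  assumes "v \<noteq> 0" "\<phi>' v = v"
  shows "\<exists>w. w \<noteq> 0 \<and> Ad a (\<phi>' w) = w"
proof (rule ccontr)
  assume no_fixed_vector: "\<not> ?thesis"
  obtain i where v: "v \<in> comm_filtration i" "v \<notin> comm_filtration (Suc i)"
    using comm_filtration_depth[OF assms(1)] .
  define S where "S = (\<lambda>w. w - Ad a (\<phi>' w))"
  define V where "V = comm_filtration (Suc i)"
  have "linear S"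
    unfolding S_def using linear_Ad[of a] linear_\<phi>'
    by (intro linear_compose_sub linear_ident) (simp add: linear_compose[unfolded o_def])
  moreover have "inj S"
    unfolding linear_inj_iff_eq_0[OF \<open>linear S\<close>] using no_fixed_vector by (auto simp: S_def)
  moreover have "S ` V \<subseteq> V"
  proof
    fix u
    assume "u \<in> S ` V"
    then obtain w where "w \<in> V" "u = w - Ad a (\<phi>' w)"
      by (auto simp: S_def)
    moreover have "Ad a (\<phi>' w) \<in> V"
      using \<open>w \<in> V\<close> unfolding V_def by (intro Ad_comm_filtration \<phi>'_comm_filtration)
    ultimately show "u \<in> V"
      unfolding V_def by (simp add: subspace_diff[OF subspace_comm_filtration])
  qed
  ultimately have "S ` V = V"
    using subspace_comm_filtration unfolding V_def by (intro linear_inj_image_subspace_eq)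
  moreover have "S v \<in> V"
    using diff_Ad_comm_filtration[OF v(1)] unfolding V_def by (simp add: S_def assms(2))
  ultimately have "S v \<in> S ` V"
    by simp
  then have "v \<in> V"
    unfolding inj_image_mem_iff[OF \<open>inj S\<close>] .
  then show False
    using v(2) by (simp add: V_def)
qed

lemma has_derivative_twist_one:
  "((\<lambda>h. conjugation y (inv (\<phi> h)) \<otimes> h) has_derivative (\<lambda>w. w - Ad y (\<phi>' w))) (at \<one>)"
  using has_derivative_group_mult_one[OF
      has_derivative_conjugation_inv_comp_one[OF has_derivative_\<phi> \<phi>_one] has_derivative_ident]
  by simp

definition twisted_orbit :: "'a \<Rightarrow> 'a set"
  where "twisted_orbit c = range (\<lambda>x. inv (\<phi> x) \<otimes> c \<otimes> x)"

lemma mem_twisted_orbit_iff: "\<alpha> \<in> twisted_orbit (inv g \<otimes> \<gamma>) \<longleftrightarrow> (\<exists>x. g \<otimes> \<phi> x \<otimes> \<alpha> = \<gamma> \<otimes> x)"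
proof -
  have "\<alpha> = inv (\<phi> x) \<otimes> (inv g \<otimes> \<gamma>) \<otimes> x \<longleftrightarrow> g \<otimes> \<phi> x \<otimes> \<alpha> = \<gamma> \<otimes> x" for x
  proof -
    have "\<alpha> = inv (\<phi> x) \<otimes> (inv g \<otimes> \<gamma>) \<otimes> x \<longleftrightarrow> \<alpha> = inv (g \<otimes> \<phi> x) \<otimes> (\<gamma> \<otimes> x)"
      by (simp add: inv_mult_group m_assoc)
    also have "\<dots> \<longleftrightarrow> g \<otimes> \<phi> x \<otimes> \<alpha> = \<gamma> \<otimes> x"
      by (auto simp: inv_solve_left)
    finally show ?thesis .
  qed
  then show ?thesis
    unfolding twisted_orbit_def by blast
qed

lemma twisted_orbit_map_comp_left_translation:
  fixes c x :: 'a
  defines "y \<equiv> inv (\<phi> x) \<otimes> c \<otimes> x"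
  shows "(\<lambda>x. inv (\<phi> x) \<otimes> c \<otimes> x) \<circ> (\<lambda>h. x \<otimes> h)
    = (\<lambda>h. y \<otimes> h) \<circ> (\<lambda>h. conjugation (inv y) (inv (\<phi> h)) \<otimes> h)"
proof -
  have "y \<otimes> (conjugation (inv y) k \<otimes> h) = k \<otimes> y \<otimes> h" for k h
    by (simp add: conjugation_def m_assoc [symmetric])
  then show ?thesis
    by (simp add: fun_eq_iff y_def inv_mult_group m_assoc)
qed

lemma twisted_orbit_map_deriv_noninjective:
  assumes "v \<noteq> 0" "\<phi>' v = v"
    and F': "((\<lambda>x. inv (\<phi> x) \<otimes> c \<otimes> x) has_derivative F') (at x)"
  shows "\<not> inj F'"
proof
  assume "inj F'"
  define y where "y = inv (\<phi> x) \<otimes> c \<otimes> x"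
  obtain w where w: "w \<noteq> 0" "Ad (inv y) (\<phi>' w) = w"
    using Ad_comp_has_eigenvalue_one[OF assms(1,2)] by blast
  obtain Lx where Lx: "((\<lambda>h. x \<otimes> h) has_derivative Lx) (at \<one>)" "inj Lx"
    by (rule left_translation_deriv)
  obtain Ly where Ly: "((\<lambda>h. y \<otimes> h) has_derivative Ly) (at \<one>)"
    by (rule left_translation_deriv)
  have "(\<lambda>x. inv (\<phi> x) \<otimes> c \<otimes> x) \<circ> (\<lambda>h. x \<otimes> h)
      = (\<lambda>h. y \<otimes> h) \<circ> (\<lambda>h. conjugation (inv y) (inv (\<phi> h)) \<otimes> h)"
    unfolding y_def by (rule twisted_orbit_map_comp_left_translation)
  moreover have "((\<lambda>h. y \<otimes> h) \<circ> (\<lambda>h. conjugation (inv y) (inv (\<phi> h)) \<otimes> h)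
      has_derivative Ly \<circ> (\<lambda>w. w - Ad (inv y) (\<phi>' w))) (at \<one>)"
    using diff_chain_at[OF has_derivative_twist_one, of _ Ly] Ly by simp
  ultimately have "((\<lambda>x. inv (\<phi> x) \<otimes> c \<otimes> x) \<circ> (\<lambda>h. x \<otimes> h)
      has_derivative Ly \<circ> (\<lambda>w. w - Ad (inv y) (\<phi>' w))) (at \<one>)"
    by simp
  moreover have "((\<lambda>x. inv (\<phi> x) \<otimes> c \<otimes> x) \<circ> (\<lambda>h. x \<otimes> h) has_derivative F' \<circ> Lx) (at \<one>)"
    using diff_chain_at[OF Lx(1), of _ F'] F' by simp
  ultimately have deriv_eq: "F' \<circ> Lx = Ly \<circ> (\<lambda>w. w - Ad (inv y) (\<phi>' w))"
    by (rule has_derivative_unique[rotated])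
  have "F' (Lx w) = Ly (w - Ad (inv y) (\<phi>' w))"
    using fun_cong[OF deriv_eq, of w] by simp
  also have "\<dots> = 0"
    using w(2) linear_0[OF has_derivative_linear[OF Ly]] by simp
  finally have "Lx w = 0"
    using \<open>inj F'\<close> linear_inj_iff_eq_0[OF has_derivative_linear[OF F']] by blast
  then have "w = 0"
    using Lx(2) linear_inj_iff_eq_0[OF has_derivative_linear[OF Lx(1)]] by blast
  with w(1) show False ..
qed

lemma negligible_twisted_orbit:
  assumes "v \<noteq> 0" "\<phi>' v = v"
  shows "negligible (twisted_orbit c)"
  unfolding twisted_orbit_def
proof (rule negligible_range_noninjective_derivative)
  let ?F = "\<lambda>x. inv (\<phi> x) \<otimes> c \<otimes> x"
  have "?F differentiable (at x)" for x
    by (intro differentiable_group_mult differentiable_group_inv differentiable_\<phi>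
        differentiable_const differentiable_ident)
  then show der: "(?F has_derivative frechet_derivative ?F (at x)) (at x)" for x
    using frechet_derivative_works by blast
  show "\<not> inj (frechet_derivative ?F (at x))" for x
    using twisted_orbit_map_deriv_noninjective[OF assms der] .
qed

end

lemma smooth_map_imp_differentiable: "smooth_map f \<Longrightarrow> f differentiable (at x)"
  unfolding smooth_map_def differentiable_def by (metis list.discI)

lemma Lie_imp_differentiable_endomorphism:
  fixes G :: "('a::euclidean_space) monoid"
  assumes "sc_nilpotent_Lie_group G" "Lie_endomorphism G \<phi>" "(\<phi> has_derivative \<phi>') (at \<one>\<^bsub>G\<^esub>)"
  obtains r where "differentiable_endomorphism G r \<phi> \<phi>'"
proof -
  obtain r where "lower_central G r = {\<one>\<^bsub>G\<^esub>}"
    using assms(1) unfolding sc_nilpotent_Lie_group_def nilpotent_group_def by blast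
  with assms have "differentiable_endomorphism G r \<phi> \<phi>'"
    unfolding sc_nilpotent_Lie_group_def nilpotent_group_def Lie_endomorphism_def
    by (intro differentiable_endomorphism.intro differentiable_endomorphism_axioms.intro
        nilpotent_differentiable_group.intro nilpotent_differentiable_group_axioms.intro
        differentiable_group.intro differentiable_group_axioms.intro)
      (auto intro: smooth_map_imp_differentiable)
  then show thesis
    by (rule that)
qed

lemma uniform_lattice_imp_countable:
  fixes N :: "'a::euclidean_space set"
  assumes "uniform_lattice G N"
  shows "countable N"
proof (rule discrete_imp_countable)
  show "discrete N"
    using assms unfolding uniform_lattice_def discrete_def isolated_in_dist_Ex_iff
    by (metis dist_commute)
qed

theorem mainTheorem15:
  fixes G :: "('a::euclidean_space) monoid"
    and \<phi> :: "'a \<Rightarrow> 'a" and N :: "'a set" and g :: "nat \<Rightarrow> 'a" and n :: nat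
  assumes "sc_nilpotent_Lie_group G"
    and "Lie_endomorphism G \<phi>"
    and "differential_has_eigenvalue_one G \<phi>"
    and "uniform_lattice G N"
    and "\<forall>k\<in>{1..n}. g k \<in> carrier G"
  shows "\<exists>\<alpha>\<in>carrier G. \<forall>x\<in>carrier G. \<forall>\<gamma>\<in>N. \<forall>k\<in>{1..n}.
           g k \<otimes>\<^bsub>G\<^esub> \<phi> x \<otimes>\<^bsub>G\<^esub> \<alpha> \<noteq> \<gamma> \<otimes>\<^bsub>G\<^esub> x"
proof -
  obtain \<phi>' v where \<phi>': "(\<phi> has_derivative \<phi>') (at \<one>\<^bsub>G\<^esub>)" and v: "v \<noteq> 0" "\<phi>' v = v"
    using assms(3) unfolding differential_has_eigenvalue_one_def by blast
  obtain r where "differentiable_endomorphism G r \<phi> \<phi>'"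
    using Lie_imp_differentiable_endomorphism[OF assms(1,2) \<phi>'] .
  then interpret differentiable_endomorphism G r \<phi> \<phi>' .
  define bad where "bad = (\<Union>(k, \<gamma>)\<in>{1..n} \<times> N. twisted_orbit (inv\<^bsub>G\<^esub> (g k) \<otimes>\<^bsub>G\<^esub> \<gamma>))"
  have "negligible bad"
    unfolding bad_def using uniform_lattice_imp_countable[OF assms(4)] negligible_twisted_orbit[OF v]
    by (intro negligible_countable_Union) auto
  then have "bad \<noteq> UNIV"
    using non_negligible_UNIV by force
  then obtain \<alpha> where "\<alpha> \<notin> bad"
    by blast
  then show ?thesis
    by (auto simp: bad_def mem_twisted_orbit_iff)
qed

end
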